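(* Let $n\ge 2$ and $1\le m\le n-1$. Write $g\in \mathrm{SO}(n)$ as a block matrix $g=\begin{pmatrix}P&Q\\ R&T\end{pmatrix}$ with blocks of sizes $(m+(n-m))\times(m+(n-m))$, and define (for all $g$ with $\det(1+P)\neq 0$, i.e. almost everywhere) $$\Upsilon^m(g)=T-R(1+P)^{-1}Q .$$ Then: (a) $\Upsilon^m$ maps $\mathrm{SO}(n)$ (where defined) into $\mathrm{SO}(n-m)$; (b) for $k,m\ge 1$ with $k+m\le n-1$ one has $\Upsilon^k\circ\Upsilon^m=\Upsilon^{k+m}$ (wherever both sides are defined), where $\Upsilon^k$ on the right of the composition is the analogous map $\mathrm{SO}(n-m)\to\mathrm{SO}(n-m-k)$; (c) for $1\le p\le n-1$, if $g\in\mathrm{SO}(n)$ is such that $1+g$ is invertible and $\Upsilon^{n-p}(g)$ is defined, and $S=(g-1)(g+1)^{-1}$, then $$\{S\}_p=\big(\Upsilon^{n-p}(g)-1\big)\big(\Upsilon^{n-p}(g)+1\big)^{-1},$$ where $\{S\}_p$ denotes the lower right $p\times p$ corner of $S$.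
   Context: For a matrix $A$, $\{A\}_p$ denotes its lower right $p\times p$ corner. *)

theory Defs
  imports "Jordan_Normal_Form.Gauss_Jordan_Elimination" "Jordan_Normal_Form.Determinant"
begin

definition SO :: "nat \<Rightarrow> real mat set" where
  "SO n = {A \<in> carrier_mat n n. A * transpose_mat A = 1\<^sub>m n \<and> det A = 1}"

text \<open>Total version of the matrix inverse (only used where the matrix is invertible).\<close>
definition minv :: "real mat \<Rightarrow> real mat" where
  "minv A = (case mat_inverse A of Some B \<Rightarrow> B | None \<Rightarrow> 0\<^sub>m (dim_row A) (dim_col A))"

definition blkP :: "nat \<Rightarrow> real mat \<Rightarrow> real mat" where
  "blkP m g = mat m m (\<lambda>(i,j). g $$ (i, j))"
definition blkQ :: "nat \<Rightarrow> real mat \<Rightarrow> real mat" where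
  "blkQ m g = mat m (dim_row g - m) (\<lambda>(i,j). g $$ (i, m + j))"
definition blkR :: "nat \<Rightarrow> real mat \<Rightarrow> real mat" where
  "blkR m g = mat (dim_row g - m) m (\<lambda>(i,j). g $$ (m + i, j))"
definition blkT :: "nat \<Rightarrow> real mat \<Rightarrow> real mat" where
  "blkT m g = mat (dim_row g - m) (dim_row g - m) (\<lambda>(i,j). g $$ (m + i, m + j))"

definition Ups_defined :: "nat \<Rightarrow> real mat \<Rightarrow> bool" where
  "Ups_defined m g \<longleftrightarrow> det (1\<^sub>m m + blkP m g) \<noteq> 0"

definition Ups :: "nat \<Rightarrow> real mat \<Rightarrow> real mat" where
  "Ups m g = blkT m g - blkR m g * minv (1\<^sub>m m + blkP m g) * blkQ m g"

definition corner :: "nat \<Rightarrow> real mat \<Rightarrow> real mat" where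
  "corner p A = mat p p (\<lambda>(i,j). A $$ (dim_row A - p + i, dim_col A - p + j))"

end

theory Submission
  imports Defs
begin

text \<open>
  Split vectors of length n as x1 @ x2 along n = m + (n - m). If det (1 + P) \<noteq> 0, then for
  every x2 there is exactly one x1 with g (x1 @ x2) = (- x1) @ y2, and y2 = Ups m g x2: the first
  block row reads (1 + P) x1 = - Q x2, and the second then gives y2 = (T - R (1 + P)^-1 Q) x2.
  All three statements follow from this description of the graph of Ups m g.
  (a) Deleting the coordinates x1 and - x1, which have equal length, from x and g x shows that
  Ups m g preserves scalar products. For the determinant, the Schur complement of 1 + P in
  g + E, with E the projection onto the first m coordinates, is Ups m g, while
  (g + E)^T g = [[1 + P, Q], [0, 1]] gives det (g + E) = det (1 + P).
  (b) The description for m, applied to x1 @ (x2 @ x3), followed by the one for k on the second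
  block, is the description for k + m.
  (c) With U = Ups (n - p) g we get (g + 1) (x1 @ x2) = 0 @ (U + 1) x2 and
  (g - 1) (x1 @ x2) = (- 2 x1) @ (U - 1) x2. As S (g + 1) = g - 1 for the Cayley transform S,
  the corner {S}_p maps (U + 1) x2 to (U - 1) x2; and U + 1 is invertible because g + 1 is.
\<close>

lemma minv_carrier_mat:
  assumes "A \<in> carrier_mat k k"
  shows "minv A \<in> carrier_mat k k"
proof (cases "mat_inverse A")
  case None
  then show ?thesis using assms unfolding minv_def by auto
next
  case (Some B)
  then show ?thesis using mat_inverse(2)[OF assms Some] unfolding minv_def by auto
qed

lemma minv_inverse:
  assumes A: "A \<in> carrier_mat k k" and det: "det A \<noteq> 0"
  shows "A * minv A = 1\<^sub>m k" and "minv A * A = 1\<^sub>m k"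
proof -
  have "mat_inverse A \<noteq> None"
    using mat_inverse(1)[OF A, of undefined] det_non_zero_imp_unit[OF A det, of undefined]
    by blast
  then obtain B where "mat_inverse A = Some B" by auto
  with mat_inverse(2)[OF A this] show "A * minv A = 1\<^sub>m k" "minv A * A = 1\<^sub>m k"
    unfolding minv_def by auto
qed

lemma invertible_mat_det_nonzero:
  assumes A: "(A :: real mat) \<in> carrier_mat n n" and inv: "invertible_mat A"
  shows "det A \<noteq> 0"
proof -
  from inv obtain B where AB: "A * B = 1\<^sub>m n" and BA: "B * A = 1\<^sub>m (dim_row B)"
    unfolding invertible_mat_def inverts_mat_def using A by auto
  have B: "B \<in> carrier_mat n n"
    using arg_cong[OF AB, of dim_col] arg_cong[OF BA, of dim_col] A by auto
  from arg_cong[OF AB, of det] have "det A * det B = 1" by (simp add: det_mult[OF A B])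
  then show ?thesis by auto
qed

lemma mult_mat_vec_uminus:
  assumes "(A :: real mat) \<in> carrier_mat r c" "v \<in> carrier_vec c"
  shows "A *\<^sub>v (- v) = - (A *\<^sub>v v)"
  using assms by (intro eq_vecI) auto

lemma mult_vec_eq_iff_minv:
  assumes A: "A \<in> carrier_mat k k" and det: "det A \<noteq> 0"
    and x: "x \<in> carrier_vec k" and b: "b \<in> carrier_vec k"
  shows "A *\<^sub>v x = b \<longleftrightarrow> x = minv A *\<^sub>v b"
proof
  assume "A *\<^sub>v x = b"
  then have "minv A *\<^sub>v b = (minv A * A) *\<^sub>v x"
    using A x minv_carrier_mat[OF A] by simp
  then show "x = minv A *\<^sub>v b" using minv_inverse(2)[OF A det] x by simp
next
  assume "x = minv A *\<^sub>v b"
  then have "A *\<^sub>v x = (A * minv A) *\<^sub>v b" using A b minv_carrier_mat[OF A] by simp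
  then show "A *\<^sub>v x = b" using minv_inverse(1)[OF A det] b by simp
qed

lemma eq_matI_mult_vec:
  assumes A: "(A :: real mat) \<in> carrier_mat r c" and B: "B \<in> carrier_mat r c"
    and eq: "\<And>v. v \<in> carrier_vec c \<Longrightarrow> A *\<^sub>v v = B *\<^sub>v v"
  shows "A = B"
proof (rule eq_matI)
  fix i j assume "i < dim_row B" "j < dim_col B"
  then have "(A *\<^sub>v unit_vec c j) $ i = (B *\<^sub>v unit_vec c j) $ i"
    using eq[of "unit_vec c j"] by simp
  with A B \<open>i < dim_row B\<close> \<open>j < dim_col B\<close>
  show "A $$ (i, j) = B $$ (i, j)" by simp
qed (use A B in auto)

lemma append_vec_assoc: "(a @\<^sub>v b) @\<^sub>v c = a @\<^sub>v (b @\<^sub>v c)"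
  by (intro eq_vecI) auto

lemma uminus_append_vec: "- (a @\<^sub>v b) = (- a) @\<^sub>v (- b :: 'a :: group_add vec)"
  by (intro eq_vecI) auto

lemma orthogonal_scalar_prod:
  assumes g: "(g :: real mat) \<in> carrier_mat n n" and orth: "transpose_mat g * g = 1\<^sub>m n"
    and v: "v \<in> carrier_vec n" and w: "w \<in> carrier_vec n"
  shows "(g *\<^sub>v v) \<bullet> (g *\<^sub>v w) = v \<bullet> w"
proof -
  have "(g *\<^sub>v v) \<bullet> (g *\<^sub>v w) = (transpose_mat g *\<^sub>v (g *\<^sub>v v)) \<bullet> w"
    using transpose_vec_mult_scalar[OF g w, of "g *\<^sub>v v"] g v by simp
  also have "\<dots> = ((transpose_mat g * g) *\<^sub>v v) \<bullet> w" using g v by simp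
  finally show ?thesis using orth v by simp
qed

lemma orthogonal_if_scalar_prod_preserved:
  assumes U: "(U :: real mat) \<in> carrier_mat k k"
    and pres: "\<And>v w. v \<in> carrier_vec k \<Longrightarrow> w \<in> carrier_vec k \<Longrightarrow>
      (U *\<^sub>v v) \<bullet> (U *\<^sub>v w) = v \<bullet> w"
  shows "transpose_mat U * U = 1\<^sub>m k"
proof (rule eq_matI)
  fix i j
  assume i: "i < dim_row (1\<^sub>m k :: real mat)" and j: "j < dim_col (1\<^sub>m k :: real mat)"
  have "col U i = U *\<^sub>v unit_vec k i" "col U j = U *\<^sub>v unit_vec k j"
    using U i j by (auto intro!: eq_vecI)
  then have "(transpose_mat U * U) $$ (i, j)
      = (U *\<^sub>v unit_vec k i) \<bullet> (U *\<^sub>v unit_vec k j)"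
    using U i j by simp
  also have "\<dots> = unit_vec k i \<bullet> unit_vec k j" by (rule pres) auto
  finally show "(transpose_mat U * U) $$ (i, j) = 1\<^sub>m k $$ (i, j)" using i j by simp
qed (use U in auto)

lemma det_four_block_mat_Schur:
  assumes A: "(A :: real mat) \<in> carrier_mat m m" and det: "det A \<noteq> 0"
    and Q: "Q \<in> carrier_mat m k" and R: "R \<in> carrier_mat k m"
    and T: "T \<in> carrier_mat k k"
  shows "det (four_block_mat A Q R T) = det A * det (T - R * minv A * Q)"
proof -
  have Ainv: "minv A \<in> carrier_mat m m" using minv_carrier_mat[OF A] .
  define X where "X = minv A * Q"
  have X: "X \<in> carrier_mat m k" using Ainv Q unfolding X_def by simp
  define N where "N = four_block_mat (1\<^sub>m m) (- X) (0\<^sub>m k m) (1\<^sub>m k)"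
  have N: "N \<in> carrier_mat (m + k) (m + k)" and detN: "det N = 1"
    unfolding N_def using X by (auto simp: det_four_block_mat_lower_left_zero[of _ m _ k])
  have "A * X = Q"
    unfolding X_def using A Ainv Q minv_inverse(1)[OF A det]
    by (simp add: assoc_mult_mat[symmetric, of _ m m _ m])
  then have "A * - X + Q * 1\<^sub>m k = 0\<^sub>m m k"
    using A X Q by (simp add: uminus_l_inv_mat)
  moreover have "R * - X + T * 1\<^sub>m k = T - R * X"
    using R X T by (intro eq_matI) auto
  ultimately have "four_block_mat A Q R T * N = four_block_mat A (0\<^sub>m m k) R (T - R * X)"
    unfolding N_def using A Q R T
    by (subst mult_four_block_mat[OF A Q R T]) (use X in auto)
  then have "det (four_block_mat A Q R T) * det N = det A * det (T - R * X)"
    using det_mult[OF four_block_carrier_mat[OF A T, of Q R] N]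
      det_four_block_mat_upper_right_zero[OF A refl R, of "T - R * X"] R X T
    by (metis minus_carrier_mat mult_carrier_mat)
  then show ?thesis using detN R Ainv Q unfolding X_def by (simp add: assoc_mult_mat[of _ k m _ m])
qed

lemma SO_D:
  assumes "g \<in> SO n"
  shows "g \<in> carrier_mat n n" and "transpose_mat g * g = 1\<^sub>m n" and "det g = 1"
proof -
  show g: "g \<in> carrier_mat n n" and "det g = 1" using assms unfolding SO_def by auto
  have "g * transpose_mat g = 1\<^sub>m n" using assms unfolding SO_def by auto
  from mat_mult_left_right_inverse[OF g _ this] g show "transpose_mat g * g = 1\<^sub>m n" by simp
qed

lemma blk_carrier_mat:
  assumes "g \<in> carrier_mat n n"
  shows "blkP m g \<in> carrier_mat m m" "blkQ m g \<in> carrier_mat m (n - m)"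
    "blkR m g \<in> carrier_mat (n - m) m" "blkT m g \<in> carrier_mat (n - m) (n - m)"
  using assms unfolding blkP_def blkQ_def blkR_def blkT_def by auto

lemma four_block_mat_blk:
  assumes "g \<in> carrier_mat n n" "m \<le> n"
  shows "four_block_mat (blkP m g) (blkQ m g) (blkR m g) (blkT m g) = g"
  using assms unfolding blkP_def blkQ_def blkR_def blkT_def by (intro eq_matI) auto

lemma mult_vec_append_blk:
  assumes g: "g \<in> carrier_mat n n" and m: "m \<le> n"
    and x1: "x1 \<in> carrier_vec m" and x2: "x2 \<in> carrier_vec (n - m)"
  shows "g *\<^sub>v (x1 @\<^sub>v x2) =
    (blkP m g *\<^sub>v x1 + blkQ m g *\<^sub>v x2) @\<^sub>v (blkR m g *\<^sub>v x1 + blkT m g *\<^sub>v x2)"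
  using four_block_mat_mult_vec[OF blk_carrier_mat[OF g] x1 x2] four_block_mat_blk[OF g m]
  by simp

lemma corner_eq_blkT:
  assumes "A \<in> carrier_mat n n" and "p \<le> n"
  shows "corner p A = blkT (n - p) A"
  using assms unfolding corner_def blkT_def by (intro eq_matI) (auto simp: add.commute)

lemma Ups_carrier_mat:
  assumes "g \<in> carrier_mat n n"
  shows "Ups m g \<in> carrier_mat (n - m) (n - m)"
  using blk_carrier_mat[OF assms] minv_carrier_mat[of "1\<^sub>m m + blkP m g" m]
  unfolding Ups_def by (intro minus_carrier_mat mult_carrier_mat) auto

lemma Ups_mult_vec:
  assumes g: "g \<in> carrier_mat n n" and x2: "x2 \<in> carrier_vec (n - m)"
  shows "Ups m g *\<^sub>v x2 =
    blkT m g *\<^sub>v x2 - blkR m g *\<^sub>v (minv (1\<^sub>m m + blkP m g) *\<^sub>v (blkQ m g *\<^sub>v x2))"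
proof -
  note blk = blk_carrier_mat[OF g, of m]
  have Ainv: "minv (1\<^sub>m m + blkP m g) \<in> carrier_mat m m"
    using blk minv_carrier_mat by simp
  show ?thesis
    unfolding Ups_def using blk Ainv x2
    by (simp add: minus_mult_distrib_mat_vec[of _ "n - m" "n - m"]
        assoc_mult_mat[OF blk(3) Ainv blk(2)]
        assoc_mult_mat_vec[OF blk(3) mult_carrier_mat[OF Ainv blk(2)] x2])
qed

lemma Ups_graph_iff:
  assumes g: "g \<in> carrier_mat n n" and m: "m \<le> n" and def: "Ups_defined m g"
    and x1: "x1 \<in> carrier_vec m" and x2: "x2 \<in> carrier_vec (n - m)"
  shows "g *\<^sub>v (x1 @\<^sub>v x2) = (- x1) @\<^sub>v y \<longleftrightarrow>
    x1 = - (minv (1\<^sub>m m + blkP m g) *\<^sub>v (blkQ m g *\<^sub>v x2)) \<and> y = Ups m g *\<^sub>v x2"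
proof -
  define A where "A = 1\<^sub>m m + blkP m g"
  note blk = blk_carrier_mat[OF g, of m]
  have A: "A \<in> carrier_mat m m" and detA: "det A \<noteq> 0"
    and Ainv: "minv A \<in> carrier_mat m m"
    using blk def minv_carrier_mat unfolding A_def Ups_defined_def by auto
  have Qx2: "blkQ m g *\<^sub>v x2 \<in> carrier_vec m" using blk x2 by simp
  have "blkP m g *\<^sub>v x1 + blkQ m g *\<^sub>v x2 = - x1 \<longleftrightarrow>
      A *\<^sub>v x1 = - (blkQ m g *\<^sub>v x2)"
    unfolding A_def using blk x1 x2
    by (auto simp: add_mult_distrib_mat_vec[of _ m m] vec_eq_iff algebra_simps)
  also have "\<dots> \<longleftrightarrow> x1 = - (minv A *\<^sub>v (blkQ m g *\<^sub>v x2))"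
    using mult_vec_eq_iff_minv[OF A detA x1, of "- (blkQ m g *\<^sub>v x2)"] Ainv Qx2
    by (simp add: mult_mat_vec_uminus[OF Ainv Qx2])
  finally have upper: "blkP m g *\<^sub>v x1 + blkQ m g *\<^sub>v x2 = - x1 \<longleftrightarrow>
      x1 = - (minv A *\<^sub>v (blkQ m g *\<^sub>v x2))" .
  have lower: "blkR m g *\<^sub>v x1 + blkT m g *\<^sub>v x2 = Ups m g *\<^sub>v x2"
    if x1_eq: "x1 = - (minv A *\<^sub>v (blkQ m g *\<^sub>v x2))"
  proof -
    have "Ups m g *\<^sub>v x2 = blkT m g *\<^sub>v x2 + blkR m g *\<^sub>v x1"
      unfolding Ups_mult_vec[OF g x2] A_def[symmetric] x1_eq using blk Ainv Qx2 x2
      by (auto simp: mult_mat_vec_uminus[of _ "n - m" m])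
    then show ?thesis using blk x1 x2 by (simp add: comm_add_vec[of _ "n - m"])
  qed
  have "g *\<^sub>v (x1 @\<^sub>v x2) = (- x1) @\<^sub>v y \<longleftrightarrow>
      blkP m g *\<^sub>v x1 + blkQ m g *\<^sub>v x2 = - x1 \<and>
      blkR m g *\<^sub>v x1 + blkT m g *\<^sub>v x2 = y"
    unfolding mult_vec_append_blk[OF g m x1 x2] by (rule append_vec_eq) (use blk x1 x2 in auto)
  with upper lower show ?thesis unfolding A_def by auto
qed

lemma Ups_graph_exists:
  assumes g: "g \<in> carrier_mat n n" and m: "m \<le> n" and def: "Ups_defined m g"
    and x2: "x2 \<in> carrier_vec (n - m)"
  obtains x1 where "x1 \<in> carrier_vec m"
    and "g *\<^sub>v (x1 @\<^sub>v x2) = (- x1) @\<^sub>v (Ups m g *\<^sub>v x2)"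
proof
  let ?x1 = "- (minv (1\<^sub>m m + blkP m g) *\<^sub>v (blkQ m g *\<^sub>v x2))"
  show x1: "?x1 \<in> carrier_vec m"
    using blk_carrier_mat[OF g, of m] minv_carrier_mat[of "1\<^sub>m m + blkP m g" m] x2 by simp
  show "g *\<^sub>v (?x1 @\<^sub>v x2) = (- ?x1) @\<^sub>v (Ups m g *\<^sub>v x2)"
    using Ups_graph_iff[OF g m def x1 x2] by simp
qed

lemma Ups_graph_unique:
  assumes g: "g \<in> carrier_mat n n" and m: "m \<le> n" and def: "Ups_defined m g"
    and x1: "x1 \<in> carrier_vec m" and x2: "x2 \<in> carrier_vec (n - m)"
    and graph: "g *\<^sub>v (x1 @\<^sub>v x2) = (- x1) @\<^sub>v y"
  shows "y = Ups m g *\<^sub>v x2"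
  using Ups_graph_iff[OF g m def x1 x2] graph by blast

lemma Ups_scalar_prod:
  assumes g: "g \<in> carrier_mat n n" and orth: "transpose_mat g * g = 1\<^sub>m n"
    and m: "m \<le> n" and def: "Ups_defined m g"
    and x2: "x2 \<in> carrier_vec (n - m)" and y2: "y2 \<in> carrier_vec (n - m)"
  shows "(Ups m g *\<^sub>v x2) \<bullet> (Ups m g *\<^sub>v y2) = x2 \<bullet> y2"
proof -
  obtain x1 where x1: "x1 \<in> carrier_vec m"
    and gx: "g *\<^sub>v (x1 @\<^sub>v x2) = (- x1) @\<^sub>v (Ups m g *\<^sub>v x2)"
    using Ups_graph_exists[OF g m def x2] .
  obtain y1 where y1: "y1 \<in> carrier_vec m"
    and gy: "g *\<^sub>v (y1 @\<^sub>v y2) = (- y1) @\<^sub>v (Ups m g *\<^sub>v y2)"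
    using Ups_graph_exists[OF g m def y2] .
  have U: "Ups m g \<in> carrier_mat (n - m) (n - m)" using Ups_carrier_mat[OF g] .
  have "x1 @\<^sub>v x2 \<in> carrier_vec n" "y1 @\<^sub>v y2 \<in> carrier_vec n"
    using append_carrier_vec[OF x1 x2] append_carrier_vec[OF y1 y2] m by simp_all
  then have "(g *\<^sub>v (x1 @\<^sub>v x2)) \<bullet> (g *\<^sub>v (y1 @\<^sub>v y2)) = (x1 @\<^sub>v x2) \<bullet> (y1 @\<^sub>v y2)"
    by (rule orthogonal_scalar_prod[OF g orth])
  then have "(- x1) \<bullet> (- y1) + (Ups m g *\<^sub>v x2) \<bullet> (Ups m g *\<^sub>v y2) = x1 \<bullet> y1 + x2 \<bullet> y2"
    unfolding gx gy using x1 x2 y1 y2 U by (simp add: scalar_prod_append[of _ m _ "n - m"])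
  then show ?thesis using x1 y1 by simp
qed

lemma det_four_block_one_add_blkP:
  assumes g: "g \<in> carrier_mat n n" and orth: "transpose_mat g * g = 1\<^sub>m n"
    and det_g: "det g = 1" and m: "m \<le> n"
  shows "det (four_block_mat (1\<^sub>m m + blkP m g) (blkQ m g) (blkR m g) (blkT m g))
    = det (1\<^sub>m m + blkP m g)"
proof -
  define P Q R T where blocks: "P = blkP m g" "Q = blkQ m g" "R = blkR m g" "T = blkT m g"
  have P: "P \<in> carrier_mat m m" and Q: "Q \<in> carrier_mat m (n - m)"
    and R: "R \<in> carrier_mat (n - m) m" and T: "T \<in> carrier_mat (n - m) (n - m)"
    unfolding blocks using blk_carrier_mat[OF g] by auto
  have g_blocks: "g = four_block_mat P Q R T"
    unfolding blocks using four_block_mat_blk[OF g m] by simp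
  have one_blocks:
    "1\<^sub>m n = four_block_mat (1\<^sub>m m) (0\<^sub>m m (n - m)) (0\<^sub>m (n - m) m) (1\<^sub>m (n - m))"
    using m by simp
  define E where "E = four_block_mat (1\<^sub>m m) (0\<^sub>m m (n - m)) (0\<^sub>m (n - m) m)
    (0\<^sub>m (n - m) (n - m) :: real mat)"
  define M where "M = four_block_mat (1\<^sub>m m + P) Q R T"
  have nm: "m + (n - m) = n" using m by simp
  note four_block_carrier = four_block_carrier_mat[of _ m m _ "n - m" "n - m", unfolded nm]
  have E: "E \<in> carrier_mat n n" unfolding E_def by (rule four_block_carrier) auto
  have M: "M \<in> carrier_mat n n" unfolding M_def by (rule four_block_carrier) (use P T in auto)
  have Et: "transpose_mat E = E" unfolding E_def by (intro eq_matI) auto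
  have "M = g + E"
    unfolding M_def E_def g_blocks using P Q R T by (subst add_four_block_mat) auto
  then have "transpose_mat M * g = transpose_mat g * g + E * g"
    using g E Et by (simp add: transpose_add add_mult_distrib_mat[of _ n n])
  also have "\<dots> = four_block_mat (1\<^sub>m m + P) Q (0\<^sub>m (n - m) m) (1\<^sub>m (n - m))"
  proof -
    have Eg: "E * g = four_block_mat P Q (0\<^sub>m (n - m) m) (0\<^sub>m (n - m) (n - m))"
      unfolding E_def g_blocks using P Q R T by (subst mult_four_block_mat) auto
    show ?thesis
      unfolding orth one_blocks Eg using P Q by (subst add_four_block_mat) auto
  qed
  finally have "det (transpose_mat M * g) = det (1\<^sub>m m + P)"
    using P Q by (simp add: det_four_block_mat_lower_left_zero[of _ m _ "n - m"])
  then show ?thesis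
    using det_mult[OF transpose_carrier_mat[THEN iffD2, OF M] g] det_g det_transpose[OF M]
    unfolding M_def blocks by simp
qed

lemma Ups_det:
  assumes g: "g \<in> SO n" and m: "m \<le> n" and def: "Ups_defined m g"
  shows "det (Ups m g) = 1"
proof -
  note g_SO = SO_D[OF g]
  note blk = blk_carrier_mat[OF g_SO(1), of m]
  have A: "1\<^sub>m m + blkP m g \<in> carrier_mat m m" using blk by simp
  have detA: "det (1\<^sub>m m + blkP m g) \<noteq> 0" using def unfolding Ups_defined_def .
  have "det (1\<^sub>m m + blkP m g)
    = det (four_block_mat (1\<^sub>m m + blkP m g) (blkQ m g) (blkR m g) (blkT m g))"
    using det_four_block_one_add_blkP[OF g_SO m] by simp
  also have "\<dots> = det (1\<^sub>m m + blkP m g) * det (Ups m g)"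
    unfolding Ups_def using det_four_block_mat_Schur[OF A detA blk(2-4)] .
  finally show ?thesis using detA by simp
qed

lemma Ups_SO:
  assumes g: "g \<in> SO n" and m: "m \<le> n" and def: "Ups_defined m g"
  shows "Ups m g \<in> SO (n - m)"
proof -
  note g_SO = SO_D[OF g]
  have U: "Ups m g \<in> carrier_mat (n - m) (n - m)" using Ups_carrier_mat[OF g_SO(1)] .
  have "transpose_mat (Ups m g) * Ups m g = 1\<^sub>m (n - m)"
    using orthogonal_if_scalar_prod_preserved[OF U] Ups_scalar_prod[OF g_SO(1,2) m def] by blast
  then have "Ups m g * transpose_mat (Ups m g) = 1\<^sub>m (n - m)"
    using mat_mult_left_right_inverse[of "transpose_mat (Ups m g)" "n - m"] U by simp
  then show ?thesis unfolding SO_def using U Ups_det[OF g m def] by simp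
qed

lemma Ups_Ups:
  assumes g: "g \<in> carrier_mat n n" and km: "k + m \<le> n"
    and def_m: "Ups_defined m g" and def_k: "Ups_defined k (Ups m g)"
    and def_km: "Ups_defined (k + m) g"
  shows "Ups k (Ups m g) = Ups (k + m) g"
proof -
  have U: "Ups m g \<in> carrier_mat (n - m) (n - m)" using Ups_carrier_mat[OF g] .
  have m: "m \<le> n" and k: "k \<le> n - m" using km by auto
  have dim: "n - m - k = n - (k + m)" "k + (n - (k + m)) = n - m" using km by auto
  show ?thesis
  proof (rule eq_matI_mult_vec)
    show "Ups k (Ups m g) \<in> carrier_mat (n - (k + m)) (n - (k + m))"
      using Ups_carrier_mat[OF U, of k] unfolding dim .
    show "Ups (k + m) g \<in> carrier_mat (n - (k + m)) (n - (k + m))"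
      using Ups_carrier_mat[OF g] .
    fix x3 :: "real vec" assume x3: "x3 \<in> carrier_vec (n - (k + m))"
    then have x3': "x3 \<in> carrier_vec (n - m - k)" unfolding dim .
    obtain x12 where x12: "x12 \<in> carrier_vec (m + k)"
      and graph: "g *\<^sub>v (x12 @\<^sub>v x3) = (- x12) @\<^sub>v (Ups (k + m) g *\<^sub>v x3)"
      using Ups_graph_exists[OF g km def_km x3] by (metis add.commute)
    define x1 x2 where split: "x1 = vec_first x12 m" "x2 = vec_last x12 k"
    have x1: "x1 \<in> carrier_vec m" and x2: "x2 \<in> carrier_vec k" unfolding split by auto
    have x23: "x2 @\<^sub>v x3 \<in> carrier_vec (n - m)"
      using append_carrier_vec[OF x2 x3] unfolding dim(2) .
    have "g *\<^sub>v (x1 @\<^sub>v (x2 @\<^sub>v x3)) = (- x1) @\<^sub>v ((- x2) @\<^sub>v (Ups (k + m) g *\<^sub>v x3))"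
      using graph x12 unfolding split append_vec_assoc[symmetric] uminus_append_vec[symmetric]
      by simp
    from Ups_graph_unique[OF g m def_m x1 x23 this]
    have "Ups m g *\<^sub>v (x2 @\<^sub>v x3) = (- x2) @\<^sub>v (Ups (k + m) g *\<^sub>v x3)" ..
    from Ups_graph_unique[OF U k def_k x2 x3' this]
    show "Ups k (Ups m g) *\<^sub>v x3 = Ups (k + m) g *\<^sub>v x3" ..
  qed
qed

lemma Ups_graph_add_diff_one:
  assumes g: "g \<in> carrier_mat n n" and m: "m \<le> n"
    and x1: "x1 \<in> carrier_vec m" and x2: "x2 \<in> carrier_vec (n - m)"
    and graph: "g *\<^sub>v (x1 @\<^sub>v x2) = (- x1) @\<^sub>v (Ups m g *\<^sub>v x2)"
  shows "(g + 1\<^sub>m n) *\<^sub>v (x1 @\<^sub>v x2) = 0\<^sub>v m @\<^sub>v ((Ups m g + 1\<^sub>m (n - m)) *\<^sub>v x2)"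
    and "(g - 1\<^sub>m n) *\<^sub>v (x1 @\<^sub>v x2) = (- x1 - x1) @\<^sub>v ((Ups m g - 1\<^sub>m (n - m)) *\<^sub>v x2)"
proof -
  have U: "Ups m g \<in> carrier_mat (n - m) (n - m)" using Ups_carrier_mat[OF g] .
  have x: "x1 @\<^sub>v x2 \<in> carrier_vec n" using append_carrier_vec[OF x1 x2] m by simp
  show "(g + 1\<^sub>m n) *\<^sub>v (x1 @\<^sub>v x2) = 0\<^sub>v m @\<^sub>v ((Ups m g + 1\<^sub>m (n - m)) *\<^sub>v x2)"
    using g x x1 x2 U graph
    by (auto simp: add_mult_distrib_mat_vec[of _ n n]
        add_mult_distrib_mat_vec[of _ "n - m" "n - m"] intro!: eq_vecI)
  show "(g - 1\<^sub>m n) *\<^sub>v (x1 @\<^sub>v x2) = (- x1 - x1) @\<^sub>v ((Ups m g - 1\<^sub>m (n - m)) *\<^sub>v x2)"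
    using g x x1 x2 U graph
    by (auto simp: minus_mult_distrib_mat_vec[of _ n n]
        minus_mult_distrib_mat_vec[of _ "n - m" "n - m"] intro!: eq_vecI)
qed

lemma Ups_add_one_det_nonzero:
  assumes g: "g \<in> carrier_mat n n" and m: "m \<le> n" and def: "Ups_defined m g"
    and det: "det (g + 1\<^sub>m n) \<noteq> 0"
  shows "det (Ups m g + 1\<^sub>m (n - m)) \<noteq> 0"
proof
  assume "det (Ups m g + 1\<^sub>m (n - m)) = 0"
  then obtain x2 where x2: "x2 \<in> carrier_vec (n - m)" "x2 \<noteq> 0\<^sub>v (n - m)"
    and kernel: "(Ups m g + 1\<^sub>m (n - m)) *\<^sub>v x2 = 0\<^sub>v (n - m)"
    using det_0_iff_vec_prod_zero[of _ "n - m"] Ups_carrier_mat[OF g, of m]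
    by (metis add_carrier_mat one_carrier_mat)
  obtain x1 where x1: "x1 \<in> carrier_vec m"
    and graph: "g *\<^sub>v (x1 @\<^sub>v x2) = (- x1) @\<^sub>v (Ups m g *\<^sub>v x2)"
    using Ups_graph_exists[OF g m def x2(1)] .
  have x: "x1 @\<^sub>v x2 \<in> carrier_vec n" using append_carrier_vec[OF x1 x2(1)] m by simp
  have "(g + 1\<^sub>m n) *\<^sub>v (x1 @\<^sub>v x2) = 0\<^sub>v n"
    unfolding Ups_graph_add_diff_one(1)[OF g m x1 x2(1) graph] kernel using m by (intro eq_vecI) auto
  moreover have G: "g + 1\<^sub>m n \<in> carrier_mat n n" using g by simp
  ultimately have "x1 @\<^sub>v x2 = minv (g + 1\<^sub>m n) *\<^sub>v 0\<^sub>v n"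
    using mult_vec_eq_iff_minv[OF G det x] by simp
  also have "\<dots> = 0\<^sub>v n" using minv_carrier_mat[OF G] by (intro eq_vecI) auto
  finally have "x1 @\<^sub>v x2 = 0\<^sub>v n" .
  then have "x1 @\<^sub>v x2 = 0\<^sub>v m @\<^sub>v 0\<^sub>v (n - m)" using m by (intro eq_vecI) auto
  with x1 x2 show False by simp
qed

lemma blkT_Cayley_mult:
  assumes g: "g \<in> carrier_mat n n" and m: "m \<le> n" and def: "Ups_defined m g"
    and det: "det (g + 1\<^sub>m n) \<noteq> 0"
  shows "blkT m ((g - 1\<^sub>m n) * minv (g + 1\<^sub>m n)) * (Ups m g + 1\<^sub>m (n - m))
    = Ups m g - 1\<^sub>m (n - m)"
proof -
  define S where "S = (g - 1\<^sub>m n) * minv (g + 1\<^sub>m n)"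
  have G: "g + 1\<^sub>m n \<in> carrier_mat n n" using g by simp
  have S: "S \<in> carrier_mat n n"
    unfolding S_def
    using mult_carrier_mat[OF minus_carrier_mat[OF one_carrier_mat] minv_carrier_mat[OF G]] .
  have S_G: "S * (g + 1\<^sub>m n) = g - 1\<^sub>m n"
    unfolding S_def using g minv_carrier_mat[OF G] minv_inverse(2)[OF G det]
    by (subst assoc_mult_mat[of _ n n _ n]) auto
  note blk = blk_carrier_mat[OF S, of m]
  have U: "Ups m g \<in> carrier_mat (n - m) (n - m)" using Ups_carrier_mat[OF g] .
  show ?thesis
    unfolding S_def[symmetric]
  proof (rule eq_matI_mult_vec)
    show "blkT m S * (Ups m g + 1\<^sub>m (n - m)) \<in> carrier_mat (n - m) (n - m)"
      and "Ups m g - 1\<^sub>m (n - m) \<in> carrier_mat (n - m) (n - m)" using blk U by auto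
    fix x2 :: "real vec" assume x2: "x2 \<in> carrier_vec (n - m)"
    obtain x1 where x1: "x1 \<in> carrier_vec m"
      and graph: "g *\<^sub>v (x1 @\<^sub>v x2) = (- x1) @\<^sub>v (Ups m g *\<^sub>v x2)"
      using Ups_graph_exists[OF g m def x2] .
    define y where "y = (Ups m g + 1\<^sub>m (n - m)) *\<^sub>v x2"
    have y: "y \<in> carrier_vec (n - m)"
      unfolding y_def using U x2 by (intro mult_mat_vec_carrier[of _ "n - m" "n - m"]) auto
    have x: "x1 @\<^sub>v x2 \<in> carrier_vec n" using append_carrier_vec[OF x1 x2] m by simp
    have "S *\<^sub>v (0\<^sub>v m @\<^sub>v y) = (g - 1\<^sub>m n) *\<^sub>v (x1 @\<^sub>v x2)"
      unfolding y_def Ups_graph_add_diff_one(1)[OF g m x1 x2 graph, symmetric] S_G[symmetric]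
      using assoc_mult_mat_vec[OF S G x] by simp
    also have "\<dots> = (- x1 - x1) @\<^sub>v ((Ups m g - 1\<^sub>m (n - m)) *\<^sub>v x2)"
      using Ups_graph_add_diff_one(2)[OF g m x1 x2 graph] .
    finally have "blkR m S *\<^sub>v 0\<^sub>v m + blkT m S *\<^sub>v y = (Ups m g - 1\<^sub>m (n - m)) *\<^sub>v x2"
      unfolding mult_vec_append_blk[OF S m zero_carrier_vec y] using blk y x1
      by (subst (asm) append_vec_eq[of _ m]) auto
    moreover have "blkR m S *\<^sub>v 0\<^sub>v m + blkT m S *\<^sub>v y = blkT m S *\<^sub>v y"
      using blk y by (intro eq_vecI) auto
    ultimately have "blkT m S *\<^sub>v y = (Ups m g - 1\<^sub>m (n - m)) *\<^sub>v x2" by simp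
    then show "(blkT m S * (Ups m g + 1\<^sub>m (n - m))) *\<^sub>v x2
      = (Ups m g - 1\<^sub>m (n - m)) *\<^sub>v x2"
      unfolding y_def using assoc_mult_mat_vec[OF blk(4) _ x2, of "Ups m g + 1\<^sub>m (n - m)"] U
      by simp
  qed
qed

lemma corner_Cayley_Ups:
  assumes g: "g \<in> carrier_mat n n" and p: "p \<le> n"
    and inv: "invertible_mat (g + 1\<^sub>m n)" and def: "Ups_defined (n - p) g"
  shows "corner p ((g - 1\<^sub>m n) * minv (g + 1\<^sub>m n))
    = (Ups (n - p) g - 1\<^sub>m p) * minv (Ups (n - p) g + 1\<^sub>m p)"
proof -
  define S U where "S = (g - 1\<^sub>m n) * minv (g + 1\<^sub>m n)" and "U = Ups (n - p) g"
  have m: "n - p \<le> n" and dim: "n - (n - p) = p" using p by auto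
  have G: "g + 1\<^sub>m n \<in> carrier_mat n n" using g by simp
  have det: "det (g + 1\<^sub>m n) \<noteq> 0" using invertible_mat_det_nonzero[OF G inv] .
  have S: "S \<in> carrier_mat n n"
    unfolding S_def
    using mult_carrier_mat[OF minus_carrier_mat[OF one_carrier_mat] minv_carrier_mat[OF G]] .
  have U1: "U + 1\<^sub>m p \<in> carrier_mat p p"
    unfolding U_def using Ups_carrier_mat[OF g, of "n - p"] dim by simp
  have detU1: "det (U + 1\<^sub>m p) \<noteq> 0"
    using Ups_add_one_det_nonzero[OF g m def det] unfolding U_def dim .
  have T: "blkT (n - p) S \<in> carrier_mat p p"
    using blk_carrier_mat(4)[OF S, of "n - p"] dim by simp
  have "corner p S = blkT (n - p) S * ((U + 1\<^sub>m p) * minv (U + 1\<^sub>m p))"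
    using corner_eq_blkT[OF S p] minv_inverse(1)[OF U1 detU1] T by simp
  also have "\<dots> = (blkT (n - p) S * (U + 1\<^sub>m p)) * minv (U + 1\<^sub>m p)"
    using T U1 minv_carrier_mat[OF U1] by (simp add: assoc_mult_mat[of _ p p _ p])
  also have "\<dots> = (U - 1\<^sub>m p) * minv (U + 1\<^sub>m p)"
    using blkT_Cayley_mult[OF g m def det] unfolding S_def U_def dim by simp
  finally show ?thesis unfolding S_def U_def .
qed

theorem proposition2p1:
  fixes n :: nat
  assumes "n \<ge> 2"
  shows
    "(\<forall>m g. 1 \<le> m \<and> m \<le> n - 1 \<and> g \<in> SO n \<and> Ups_defined m g
        \<longrightarrow> Ups m g \<in> SO (n - m))
   \<and> (\<forall>k m g. 1 \<le> k \<and> 1 \<le> m \<and> k + m \<le> n - 1 \<and> g \<in> SO n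
        \<and> Ups_defined m g \<and> Ups_defined k (Ups m g) \<and> Ups_defined (k + m) g
        \<longrightarrow> Ups k (Ups m g) = Ups (k + m) g)
   \<and> (\<forall>p g. 1 \<le> p \<and> p \<le> n - 1 \<and> g \<in> SO n \<and> invertible_mat (g + 1\<^sub>m n)
        \<and> Ups_defined (n - p) g
        \<longrightarrow> corner p ((g - 1\<^sub>m n) * minv (g + 1\<^sub>m n))
            = (Ups (n - p) g - 1\<^sub>m p) * minv (Ups (n - p) g + 1\<^sub>m p))"
proof (intro conjI allI impI)
  fix m g
  assume "1 \<le> m \<and> m \<le> n - 1 \<and> g \<in> SO n \<and> Ups_defined m g"
  then show "Ups m g \<in> SO (n - m)" by (intro Ups_SO) auto
next
  fix k m g
  assume "1 \<le> k \<and> 1 \<le> m \<and> k + m \<le> n - 1 \<and> g \<in> SO n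
    \<and> Ups_defined m g \<and> Ups_defined k (Ups m g) \<and> Ups_defined (k + m) g"
  then show "Ups k (Ups m g) = Ups (k + m) g" by (intro Ups_Ups[OF SO_D(1)]) auto
next
  fix p g
  assume "1 \<le> p \<and> p \<le> n - 1 \<and> g \<in> SO n \<and> invertible_mat (g + 1\<^sub>m n)
    \<and> Ups_defined (n - p) g"
  then show "corner p ((g - 1\<^sub>m n) * minv (g + 1\<^sub>m n))
    = (Ups (n - p) g - 1\<^sub>m p) * minv (Ups (n - p) g + 1\<^sub>m p)"
    by (intro corner_Cayley_Ups[OF SO_D(1)]) auto
qed

end
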